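(* Let $\nu>0$, $0<K<\nu^2/2$, and let $(\Phi_m)$ satisfy the standing assumptions in the context. Then $$Q(K):=\sup_{W\in\mathcal{C}_K}\mathcal{Q}(W)=\sum_{m=1}^\infty\Phi_m''(\nu m)\,K\,m^2,$$ where $\mathcal{Q}(W):=\frac12\int_{\mathbb{R}}\sum_{m=1}^\infty\Phi_m''(\nu m)\,(A_mW(s))^2\,ds$.
   Context: $A_m f(\xi):=\int_{-m/2}^{m/2} f(\xi+s)\,ds$. $\mathcal{C}$ is the $\mathsf{L}^2(\mathbb{R})$-closure of $\{W\in C_c^\infty(\mathbb{R}): W(x)=W(-x)\ge0,\ \dot W(x)=-\dot W(-x)\le0\ \forall x\ge0\}$; $\mathcal{C}_K:=\{W\in\mathcal{C}:\frac12\|W\|_2^2=K\}$. Standing assumptions: for every $m$, $\Phi_m:[0,\infty)\to[0,\infty)$, $\Phi_m\in C^4([0,\infty))$, $\Phi_m\ge0,\Phi_m'\le0,\Phi_m''\ge0,\Phi_m'''\le0,\Phi_m^{(4)}\ge0$ (strict for $m=1$, $s>0$); and for a fixed $\gamma\in(5/2,3)$ the series $\sum_m\Phi_m'(\nu m-\sqrt{2Km})m$, $\sum_m\Phi_m''(\nu m-\sqrt{2Km})m^2$, $\sum_m\Phi_m''(\nu m)m^\gamma$, $\sum_m\Phi_m'''(\nu m-\sqrt{2Km})m^{3/2}$ are finite. *)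

theory Defs
  imports "HOL-Analysis.Analysis"
begin

definition smooth_cc :: "(real \<Rightarrow> real) \<Rightarrow> bool" where
  "smooth_cc W \<longleftrightarrow>
     (\<exists>D::nat \<Rightarrow> real \<Rightarrow> real. D 0 = W \<and> (\<forall>k x. (D k has_real_derivative D (Suc k) x) (at x)))
   \<and> (\<exists>R. \<forall>x. R < \<bar>x\<bar> \<longrightarrow> W x = 0)"

definition C0 :: "(real \<Rightarrow> real) \<Rightarrow> bool" where
  "C0 W \<longleftrightarrow> smooth_cc W \<and>
     (\<forall>x\<ge>0. W x = W (-x) \<and> W x \<ge> 0 \<and> deriv W x = - deriv W (-x) \<and> deriv W x \<le> 0)"

text \<open>L2-closure of the generating set (functions representing L2 classes).\<close>
definition Ccl :: "(real \<Rightarrow> real) \<Rightarrow> bool" where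
  "Ccl f \<longleftrightarrow> f \<in> borel_measurable lborel \<and> integrable lborel (\<lambda>x. (f x)\<^sup>2) \<and>
     (\<exists>Ws. (\<forall>n. C0 (Ws n)) \<and>
        (\<lambda>n. LINT x|lborel. (f x - Ws n x)\<^sup>2) \<longlonglongrightarrow> 0)"

definition CK :: "real \<Rightarrow> (real \<Rightarrow> real) \<Rightarrow> bool" where
  "CK K W \<longleftrightarrow> Ccl W \<and> (1/2) * (LINT x|lborel. (W x)\<^sup>2) = K"

definition Aop :: "nat \<Rightarrow> (real \<Rightarrow> real) \<Rightarrow> real \<Rightarrow> real" where
  "Aop m f \<xi> = (LBINT s=-(real m)/2..(real m)/2. f (\<xi> + s))"

text \<open>The functional Q(W) = 1/2 int sum_{m>=1} Phi_m''(nu m) (A_m W(s))^2 ds,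
  computed in [0,oo] (the integrand is nonnegative). Phi2 m = Phi_m''.\<close>
definition Qfun :: "real \<Rightarrow> (nat \<Rightarrow> real \<Rightarrow> real) \<Rightarrow> (real \<Rightarrow> real) \<Rightarrow> ennreal" where
  "Qfun \<nu> Phi2 W = ennreal (1/2) *
     (\<integral>\<^sup>+ s. (\<Sum>m. ennreal (Phi2 (Suc m) (\<nu> * real (Suc m)) * (Aop (Suc m) W s)\<^sup>2)) \<partial>lborel)"

end

theory Submission
  imports Defs "HOL-Computational_Algebra.Polynomial" "HOL-Real_Asymp.Real_Asymp"
begin

text \<open>
  Upper bound: by Cauchy-Schwarz, (A_m W(s))^2 \<le> m \<integral>_{|t|<m/2} W(s+t)^2 dt, and integrating
  in s (Tonelli and translation invariance of Lebesgue measure) gives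
  \<integral> (A_m W)^2 \<le> m^2 \<integral> W^2 = 2 K m^2, hence Q(W) \<le> \<Sum> \<Phi>_m''(\<nu> m) K m^2 on C_K.

  Lower bound: a smooth even plateau \<psi>_L, equal to 1 on [-L, L], vanishing outside [-L-1, L+1]
  and decreasing on [0, \<infinity>), is built from exp(-1/x); suitably scaled, h \<psi>_L lies in C_K.
  For m \<le> N and |s| \<le> L - N/2 the average A_m (h \<psi>_L)(s) is exactly h m, so
  Q(h \<psi>_L) \<ge> K (\<Sum>_{m\<le>N} \<Phi>_m''(\<nu> m) m^2) (2L - N)/(2L + 2). Letting L \<rightarrow> \<infinity> and then
  N \<rightarrow> \<infinity> gives the reverse inequality.
\<close>

section \<open>Functions differentiable to every order\<close>

fun smooth_upto :: "nat \<Rightarrow> (real \<Rightarrow> real) \<Rightarrow> bool" where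
  "smooth_upto 0 f \<longleftrightarrow> True"
| "smooth_upto (Suc n) f \<longleftrightarrow> (\<forall>x. (f has_real_derivative deriv f x) (at x)) \<and> smooth_upto n (deriv f)"

lemma smooth_upto_Suc_imp: "smooth_upto (Suc n) f \<Longrightarrow> smooth_upto n f"
  by (induction n arbitrary: f) auto

lemma smooth_upto_SucI:
  assumes "\<And>x. (f has_real_derivative f' x) (at x)" and "smooth_upto n f'"
  shows "smooth_upto (Suc n) f"
proof -
  have "deriv f = f'"
    using assms(1) DERIV_imp_deriv by blast
  then show ?thesis
    using assms by simp
qed

lemma smooth_upto_const: "smooth_upto n (\<lambda>x. c)"
proof (induction n arbitrary: c)
  case (Suc n)
  show ?case
    by (rule smooth_upto_SucI[where f'="\<lambda>x. 0"]) (auto simp: Suc)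
qed simp

lemma smooth_upto_ident: "smooth_upto n (\<lambda>x. x)"
proof (cases n)
  case (Suc k)
  show ?thesis
    unfolding Suc by (rule smooth_upto_SucI[where f'="\<lambda>x. 1"]) (auto intro: smooth_upto_const)
qed simp

lemma smooth_upto_add:
  "smooth_upto n f \<Longrightarrow> smooth_upto n g \<Longrightarrow> smooth_upto n (\<lambda>x. f x + g x)"
proof (induction n arbitrary: f g)
  case (Suc n)
  show ?case
    by (rule smooth_upto_SucI[where f'="\<lambda>x. deriv f x + deriv g x"])
       (use Suc in \<open>auto intro!: derivative_eq_intros\<close>)
qed simp

lemma smooth_upto_mult:
  "smooth_upto n f \<Longrightarrow> smooth_upto n g \<Longrightarrow> smooth_upto n (\<lambda>x. f x * g x)"
proof (induction n arbitrary: f g)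
  case (Suc n)
  have "smooth_upto n (\<lambda>x. deriv f x * g x + f x * deriv g x)"
    using Suc smooth_upto_Suc_imp[OF Suc.prems(1)] smooth_upto_Suc_imp[OF Suc.prems(2)]
    by (intro smooth_upto_add Suc.IH) auto
  then show ?case
    by (intro smooth_upto_SucI[where f'="\<lambda>x. deriv f x * g x + f x * deriv g x"])
       (use Suc in \<open>auto intro!: derivative_eq_intros\<close>)
qed simp

lemma smooth_upto_compose:
  assumes k: "\<And>n. smooth_upto n k"
  shows "smooth_upto n f \<Longrightarrow> smooth_upto n (\<lambda>x. f (k x))"
proof (induction n arbitrary: f)
  case (Suc n)
  have "smooth_upto n (\<lambda>x. deriv f (k x) * deriv k x)"
    using Suc k[of "Suc n"] by (intro smooth_upto_mult Suc.IH) auto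
  moreover have "((\<lambda>x. f (k x)) has_real_derivative deriv f (k x) * deriv k x) (at x)" for x
    using Suc.prems k[of 1] by (auto intro!: DERIV_chain2[of f])
  ultimately show ?case
    by (intro smooth_upto_SucI) auto
qed simp

lemma smooth_upto_inverse:
  "(\<And>x. f x \<noteq> 0) \<Longrightarrow> smooth_upto n f \<Longrightarrow> smooth_upto n (\<lambda>x. inverse (f x))"
proof (induction n arbitrary: f)
  case (Suc n)
  have "smooth_upto n (\<lambda>x. (-1) * deriv f x * (inverse (f x) * inverse (f x)))"
    using Suc smooth_upto_Suc_imp[OF Suc.prems(2)]
    by (intro smooth_upto_mult Suc.IH smooth_upto_const) auto
  moreover have "((\<lambda>x. inverse (f x)) has_real_derivative
      (-1) * deriv f x * (inverse (f x) * inverse (f x))) (at x)" for x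
    using Suc.prems by (auto intro!: derivative_eq_intros simp: power2_eq_square)
  ultimately show ?case
    by (intro smooth_upto_SucI) auto
qed simp

lemma smooth_upto_iterated_deriv: "smooth_upto (k + n) f \<Longrightarrow> smooth_upto n ((deriv ^^ k) f)"
proof (induction k arbitrary: n)
  case (Suc k)
  then have "smooth_upto (Suc n) ((deriv ^^ k) f)"
    by (metis add_Suc_shift)
  then show ?case
    by simp
qed simp

lemma smooth_cc_if_smooth_upto:
  assumes "\<And>n. smooth_upto n f" and "\<And>x. R < \<bar>x\<bar> \<Longrightarrow> f x = 0"
  shows "smooth_cc f"
  unfolding smooth_cc_def
proof (intro conjI exI[of _ "\<lambda>k. (deriv ^^ k) f"] exI[of _ R] allI impI)
  fix k x
  have "smooth_upto (Suc 0) ((deriv ^^ k) f)"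
    using smooth_upto_iterated_deriv[of k "Suc 0" f] assms(1) by simp
  then show "((deriv ^^ k) f has_real_derivative (deriv ^^ Suc k) f x) (at x)"
    by simp
qed (use assms(2) in auto)

section \<open>A smooth plateau function\<close>

lemma poly_times_exp_neg_tendsto_0: "((\<lambda>z::real. poly p z * exp (- z)) \<longlongrightarrow> 0) at_top"
proof -
  have "((\<lambda>z. \<Sum>i\<le>degree p. coeff p i * (z ^ i / exp z)) \<longlongrightarrow> (\<Sum>i\<le>degree p. coeff p i * 0)) at_top"
    by (intro tendsto_sum tendsto_mult tendsto_const tendsto_power_div_exp_0)
  then show ?thesis
    by (simp add: poly_altdef sum_divide_distrib exp_minus field_simps)
qed

definition flat :: "real poly \<Rightarrow> real \<Rightarrow> real" where
  "flat q x = (if x > 0 then poly q (1/x) * exp (- (1/x)) else 0)"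

lemma has_real_derivative_flat:
  "(flat q has_real_derivative flat (monom 1 2 * (q - pderiv q)) x) (at x)"
proof (cases x "0::real" rule: linorder_cases)
  case greater
  have "((\<lambda>x. poly q (1/x) * exp (- (1/x))) has_real_derivative
      flat (monom 1 2 * (q - pderiv q)) x) (at x)"
    using greater by (auto intro!: derivative_eq_intros simp: flat_def poly_monom field_simps power2_eq_square)
  then show ?thesis
    by (rule has_field_derivative_transform_within_open[where S="{0<..}"])
       (use greater in \<open>auto simp: flat_def\<close>)
next
  case less
  have "((\<lambda>x. 0) has_real_derivative flat (monom 1 2 * (q - pderiv q)) x) (at x)"
    using less by (auto intro!: derivative_eq_intros simp: flat_def)
  then show ?thesis
    by (rule has_field_derivative_transform_within_open[where S="{..<0}"])
       (use less in \<open>auto simp: flat_def\<close>)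
next
  case equal
  \<comment> \<open>With z = 1/y the right difference quotient at 0 is z q(z) exp(-z).\<close>
  have "((\<lambda>z. poly (pCons 0 q) z * exp (- z)) \<longlongrightarrow> 0) at_top"
    by (rule poly_times_exp_neg_tendsto_0)
  then have "((\<lambda>z. (flat q (inverse z) - flat q 0) / (inverse z - 0)) \<longlongrightarrow> 0) at_top"
    by (rule tendsto_cong[THEN iffD1, rotated])
       (use eventually_gt_at_top[of 0] in \<open>eventually_elim, auto simp: flat_def field_simps\<close>)
  then have right: "((\<lambda>y. (flat q y - flat q 0) / (y - 0)) \<longlongrightarrow> 0) (at_right 0)"
    by (simp add: filterlim_at_right_to_top)
  have left: "((\<lambda>y. (flat q y - flat q 0) / (y - 0)) \<longlongrightarrow> 0) (at_left 0)"
    by (rule tendsto_eventually) (auto simp: flat_def eventually_at_left_field intro!: exI[of _ "-1"])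
  have "((\<lambda>y. (flat q y - flat q 0) / (y - 0)) \<longlongrightarrow> 0) (at 0)"
    using left right by (rule filterlim_split_at)
  then show ?thesis
    unfolding equal has_field_derivative_iff by (simp add: flat_def)
qed

lemma smooth_upto_flat: "smooth_upto n (flat q)"
proof (induction n arbitrary: q)
  case (Suc n)
  show ?case
    by (rule smooth_upto_SucI[OF has_real_derivative_flat Suc])
qed simp

lemma flat_1_eq: "flat 1 x = (if x > 0 then exp (- (1/x)) else 0)"
  by (simp add: flat_def)

lemma flat_1_nonneg: "flat 1 x \<ge> 0"
  by (simp add: flat_1_eq)

lemma flat_1_pos: "x > 0 \<Longrightarrow> flat 1 x > 0"
  by (simp add: flat_1_eq)

lemma flat_1_eq_0: "x \<le> 0 \<Longrightarrow> flat 1 x = 0"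
  by (simp add: flat_1_eq)

lemma flat_1_mono: "x \<le> y \<Longrightarrow> flat 1 x \<le> flat 1 y"
  by (auto simp: flat_1_eq divide_simps)

definition smooth_step :: "real \<Rightarrow> real" where
  "smooth_step t = flat 1 t / (flat 1 t + flat 1 (1 - t))"

lemma smooth_step_denom_pos: "flat 1 t + flat 1 (1 - t) > 0"
  using flat_1_pos[of t] flat_1_pos[of "1 - t"] flat_1_nonneg[of t] flat_1_nonneg[of "1 - t"]
  by (cases "t > 0") auto

lemma smooth_upto_smooth_step: "smooth_upto n smooth_step"
proof -
  have "smooth_upto k (\<lambda>t. 1 + (-1) * t)" for k
    by (intro smooth_upto_add smooth_upto_mult smooth_upto_const smooth_upto_ident)
  then have "smooth_upto n (\<lambda>t. flat 1 (1 + (-1) * t))"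
    by (rule smooth_upto_compose[OF _ smooth_upto_flat])
  then have "smooth_upto n (\<lambda>t. flat 1 t * inverse (flat 1 t + flat 1 (1 - t)))"
    using smooth_step_denom_pos
    by (intro smooth_upto_mult smooth_upto_flat smooth_upto_inverse smooth_upto_add)
       (auto simp: less_le)
  then show ?thesis
    by (simp add: smooth_step_def[abs_def] divide_inverse)
qed

lemma smooth_step_eq_0: "t \<le> 0 \<Longrightarrow> smooth_step t = 0"
  by (simp add: smooth_step_def flat_1_eq_0)

lemma smooth_step_eq_1: "t \<ge> 1 \<Longrightarrow> smooth_step t = 1"
  using smooth_step_denom_pos[of t] by (simp add: smooth_step_def flat_1_eq_0)

lemma smooth_step_nonneg: "smooth_step t \<ge> 0"
  using smooth_step_denom_pos[of t] flat_1_nonneg[of t] by (simp add: smooth_step_def)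

lemma smooth_step_le_1: "smooth_step t \<le> 1"
  using smooth_step_denom_pos[of t] flat_1_nonneg[of "1 - t"] by (simp add: smooth_step_def)

lemma smooth_step_mono:
  assumes "t \<le> t'"
  shows "smooth_step t \<le> smooth_step t'"
proof -
  have "flat 1 t \<le> flat 1 t'" "flat 1 (1 - t') \<le> flat 1 (1 - t)"
    using assms by (auto intro: flat_1_mono)
  then have "flat 1 t * flat 1 (1 - t') \<le> flat 1 t' * flat 1 (1 - t)"
    by (intro mult_mono) (auto simp: flat_1_nonneg)
  then have "flat 1 t * (flat 1 t' + flat 1 (1 - t')) \<le> flat 1 t' * (flat 1 t + flat 1 (1 - t))"
    by (simp add: algebra_simps)
  then show ?thesis
    using smooth_step_denom_pos[of t] smooth_step_denom_pos[of t']
    by (simp add: smooth_step_def divide_simps)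
qed

definition plateau :: "real \<Rightarrow> real \<Rightarrow> real" where
  "plateau L x = smooth_step (L + 1 - x) * smooth_step (L + 1 + x)"

lemma smooth_upto_plateau: "smooth_upto n (plateau L)"
proof -
  have reflect: "smooth_upto k (\<lambda>x. (L + 1) + (-1) * x)"
    and shift: "smooth_upto k (\<lambda>x. (L + 1) + x)" for k
    by (intro smooth_upto_add smooth_upto_mult smooth_upto_const smooth_upto_ident)+
  have "smooth_upto n (\<lambda>x. smooth_step ((L + 1) + (-1) * x) * smooth_step ((L + 1) + x))"
    by (intro smooth_upto_mult smooth_upto_compose[OF reflect smooth_upto_smooth_step]
        smooth_upto_compose[OF shift smooth_upto_smooth_step])
  then show ?thesis
    by (simp add: plateau_def[abs_def])
qed

lemma plateau_minus: "plateau L (- x) = plateau L x"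
  by (simp add: plateau_def)

lemma plateau_eq_abs: "L \<ge> 0 \<Longrightarrow> plateau L x = smooth_step (L + 1 - \<bar>x\<bar>)"
  by (cases "x \<ge> 0") (auto simp: plateau_def smooth_step_eq_1)

lemma plateau_eq_1: "L \<ge> 0 \<Longrightarrow> \<bar>x\<bar> \<le> L \<Longrightarrow> plateau L x = 1"
  by (simp add: plateau_eq_abs smooth_step_eq_1)

lemma plateau_eq_0: "L \<ge> 0 \<Longrightarrow> L + 1 \<le> \<bar>x\<bar> \<Longrightarrow> plateau L x = 0"
  by (simp add: plateau_eq_abs smooth_step_eq_0)

lemma plateau_nonneg: "plateau L x \<ge> 0"
  by (simp add: plateau_def smooth_step_nonneg)

lemma plateau_le_1: "plateau L x \<le> 1"
  unfolding plateau_def using smooth_step_nonneg smooth_step_le_1 by (intro mult_le_one) auto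

lemma plateau_antimono: "L \<ge> 0 \<Longrightarrow> 0 \<le> x \<Longrightarrow> x \<le> y \<Longrightarrow> plateau L y \<le> plateau L x"
  by (simp add: plateau_eq_abs smooth_step_mono)

lemma deriv_minus_if_even:
  assumes even: "\<And>y. f (- y) = f y" and "(f has_real_derivative D) (at x)"
  shows "deriv f (- x) = - D"
proof -
  have "((\<lambda>y. f (- y)) has_real_derivative - (- D)) (at x)"
    using assms(2) even by simp
  then have "(f has_real_derivative - D) (at (- x))"
    using DERIV_mirror[where f=f and x=x and y="- D"] by blast
  then show ?thesis
    by (rule DERIV_imp_deriv)
qed

lemma derivative_nonpos_if_max_right:
  assumes "(f has_real_derivative D) (at x)" and "\<And>y. y \<ge> x \<Longrightarrow> f y \<le> f x"
  shows "D \<le> 0"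
proof (rule ccontr)
  assume "\<not> D \<le> 0"
  then obtain d where "d > 0" and "\<And>h. 0 < h \<Longrightarrow> h < d \<Longrightarrow> f x < f (x + h)"
    using DERIV_pos_inc_right[OF assms(1)] by auto
  then have "f x < f (x + d/2)"
    by simp
  then show False
    using assms(2)[of "x + d/2"] \<open>d > 0\<close> by simp
qed

lemma C0_scaled_plateau:
  assumes "L \<ge> 0" and "h \<ge> 0"
  shows "C0 (\<lambda>x. h * plateau L x)"
proof -
  let ?W = "\<lambda>x. h * plateau L x"
  have smooth: "smooth_upto n ?W" for n
    by (intro smooth_upto_mult smooth_upto_const smooth_upto_plateau)
  have dW: "(?W has_real_derivative deriv ?W x) (at x)" for x
    using smooth[of 1] by simp
  show ?thesis
    unfolding C0_def
  proof (intro conjI allI impI)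
    show "smooth_cc ?W"
      using assms(1) by (intro smooth_cc_if_smooth_upto[OF smooth, of "L + 1"]) (simp add: plateau_eq_0)
    fix x :: real
    assume "x \<ge> 0"
    show "?W x = ?W (- x)" and "?W x \<ge> 0"
      using assms(2) by (simp_all add: plateau_minus plateau_nonneg)
    show "deriv ?W x = - deriv ?W (- x)"
      using deriv_minus_if_even[OF _ dW] plateau_minus by simp
    show "deriv ?W x \<le> 0"
      using derivative_nonpos_if_max_right[OF dW] plateau_antimono[OF assms(1) \<open>x \<ge> 0\<close>] assms(2)
      by (simp add: mult_left_mono)
  qed
qed

lemma Ccl_if_C0:
  assumes "C0 W"
  shows "Ccl W"
proof -
  obtain D R where D: "D 0 = W" "\<And>k x. (D k has_real_derivative D (Suc k) x) (at x)"
    and R: "\<And>x. R < \<bar>x\<bar> \<Longrightarrow> W x = 0"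
    using assms unfolding C0_def smooth_cc_def by blast
  have "isCont W x" for x
    using D DERIV_isCont by metis
  then have cont: "continuous_on UNIV W"
    by (simp add: continuous_at_imp_continuous_on)
  have "integrable lborel (\<lambda>x. indicator {-R..R} x *\<^sub>R (W x)\<^sup>2)"
    by (intro borel_integrable_compact continuous_intros continuous_on_subset[OF cont]) auto
  moreover have "(\<lambda>x. indicator {-R..R} x *\<^sub>R (W x)\<^sup>2) = (\<lambda>x. (W x)\<^sup>2)"
  proof
    fix x
    show "indicator {-R..R} x *\<^sub>R (W x)\<^sup>2 = (W x)\<^sup>2"
      by (cases "x \<in> {-R..R}") (auto intro!: R)
  qed
  ultimately have "integrable lborel (\<lambda>x. (W x)\<^sup>2)"
    by simp
  moreover have "W \<in> borel_measurable lborel"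
    using cont by (simp add: borel_measurable_continuous_onI measurable_lborel2)
  ultimately show ?thesis
    unfolding Ccl_def using assms by (auto intro!: exI[of _ "\<lambda>n. W"])
qed

section \<open>The averaging operator\<close>

lemma Aop_eq_integral:
  "Aop m f \<xi> = (\<integral>t. indicator {- real m / 2<..<real m / 2} t * f (\<xi> + t) \<partial>lborel)"
  unfolding Aop_def interval_lebesgue_integral_def set_lebesgue_integral_def
  by (simp add: einterval_eq_Icc)

lemma borel_measurable_Aop [measurable]:
  assumes [measurable]: "W \<in> borel_measurable borel"
  shows "Aop m W \<in> borel_measurable borel"
  unfolding Aop_eq_integral[abs_def] by measurable

lemma Aop_scaled_plateau:
  assumes "L \<ge> 0" and "\<bar>s\<bar> \<le> L - real m / 2"
  shows "Aop m (\<lambda>x. h * plateau L x) s = h * real m"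
proof -
  let ?I = "{- real m / 2<..<real m / 2}"
  have integrand: "indicator ?I t * (h * plateau L (s + t)) = h * indicator ?I t" for t
  proof (cases "t \<in> ?I")
    case True
    then have "\<bar>s + t\<bar> \<le> L"
      using assms(2) by auto
    then show ?thesis
      using plateau_eq_1[OF assms(1)] True by simp
  qed simp
  have "Aop m (\<lambda>x. h * plateau L x) s = (\<integral>t. h * indicator ?I t \<partial>lborel)"
    unfolding Aop_eq_integral by (simp only: integrand)
  also have "\<dots> = h * real m"
    by simp
  finally show ?thesis .
qed

lemma integral_indicator_sq_le:
  fixes f :: "'a \<Rightarrow> real"
  assumes [measurable]: "f \<in> borel_measurable M" "A \<in> sets M"
  shows "ennreal ((\<integral>x. indicator A x * f x \<partial>M)\<^sup>2)
    \<le> emeasure M A * (\<integral>\<^sup>+x\<in>A. ennreal ((f x)\<^sup>2) \<partial>M)"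
proof (cases "integrable M (\<lambda>x. indicator A x * f x)")
  case True
  let ?F = "\<lambda>x. ennreal (indicator A x * \<bar>f x\<bar>)"
  have "ennreal \<bar>\<integral>x. indicator A x * f x \<partial>M\<bar> \<le> (\<integral>\<^sup>+x. norm (indicator A x * f x) \<partial>M)"
    using integral_norm_bound_ennreal[OF True] by simp
  also have "\<dots> = (\<integral>\<^sup>+x. ?F x * indicator A x \<partial>M)"
    by (intro nn_integral_cong) (simp add: indicator_def abs_mult)
  finally have "(ennreal \<bar>\<integral>x. indicator A x * f x \<partial>M\<bar>)\<^sup>2 \<le> (\<integral>\<^sup>+x. ?F x * indicator A x \<partial>M)\<^sup>2"
    by (rule power_mono) simp
  then have "ennreal ((\<integral>x. indicator A x * f x \<partial>M)\<^sup>2) \<le> (\<integral>\<^sup>+x. ?F x * indicator A x \<partial>M)\<^sup>2"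
    by (simp add: ennreal_power)
  also have "\<dots> \<le> (\<integral>\<^sup>+x. (?F x)\<^sup>2 \<partial>M) * (\<integral>\<^sup>+x. (indicator A x)\<^sup>2 \<partial>M)"
    by (rule Cauchy_Schwarz_nn_integral) measurable
  also have "(\<integral>\<^sup>+x. (?F x)\<^sup>2 \<partial>M) = (\<integral>\<^sup>+x\<in>A. ennreal ((f x)\<^sup>2) \<partial>M)"
    by (intro nn_integral_cong) (simp add: indicator_def ennreal_power)
  also have "(\<integral>\<^sup>+x. (indicator A x)\<^sup>2 \<partial>M) = emeasure M A"
    using assms(2) by (simp add: power2_eq_square indicator_inter_arith[symmetric])
  finally show ?thesis
    by (simp add: mult.commute)
qed (simp add: not_integrable_integral_eq)

lemma Aop_sq_le:
  assumes [measurable]: "W \<in> borel_measurable borel"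
  shows "ennreal ((Aop m W s)\<^sup>2)
    \<le> ennreal (real m) * (\<integral>\<^sup>+t\<in>{- real m / 2<..<real m / 2}. ennreal ((W (s + t))\<^sup>2) \<partial>lborel)"
proof -
  have "(\<lambda>t. W (s + t)) \<in> borel_measurable lborel"
    by measurable
  from integral_indicator_sq_le[OF this, of "{- real m / 2<..<real m / 2}"]
  show ?thesis
    by (simp add: Aop_eq_integral)
qed

lemma nn_integral_set_translate:
  fixes g :: "real \<Rightarrow> ennreal"
  assumes [measurable]: "g \<in> borel_measurable borel" "A \<in> sets borel"
  shows "(\<integral>\<^sup>+s. (\<integral>\<^sup>+t\<in>A. g (s + t) \<partial>lborel) \<partial>lborel) = emeasure lborel A * (\<integral>\<^sup>+x. g x \<partial>lborel)"
proof -
  have "(\<integral>\<^sup>+s. (\<integral>\<^sup>+t\<in>A. g (s + t) \<partial>lborel) \<partial>lborel)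
      = (\<integral>\<^sup>+t. (\<integral>\<^sup>+s. g (s + t) * indicator A t \<partial>lborel) \<partial>lborel)"
    by (rule lborel_pair.Fubini'[of "\<lambda>t s. g (s + t) * indicator A t"]) measurable
  also have "\<dots> = (\<integral>\<^sup>+t. (\<integral>\<^sup>+x. g x \<partial>lborel) * indicator A t \<partial>lborel)"
  proof (intro nn_integral_cong)
    fix t
    have "(\<integral>\<^sup>+x. g x \<partial>lborel) = (\<integral>\<^sup>+s. g (s + t) \<partial>lborel)"
      using nn_integral_real_affine[of g 1 t] by (simp add: add.commute)
    then show "(\<integral>\<^sup>+s. g (s + t) * indicator A t \<partial>lborel) = (\<integral>\<^sup>+x. g x \<partial>lborel) * indicator A t"
      by (simp add: nn_integral_multc)
  qed
  also have "\<dots> = emeasure lborel A * (\<integral>\<^sup>+x. g x \<partial>lborel)"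
    using nn_integral_cmult_indicator[of A lborel "\<integral>\<^sup>+x. g x \<partial>lborel"] by (simp add: ac_simps)
  finally show ?thesis .
qed

lemma nn_integral_Aop_sq_le:
  assumes [measurable]: "W \<in> borel_measurable borel"
  shows "(\<integral>\<^sup>+s. ennreal ((Aop m W s)\<^sup>2) \<partial>lborel)
    \<le> ennreal ((real m)\<^sup>2) * (\<integral>\<^sup>+x. ennreal ((W x)\<^sup>2) \<partial>lborel)"
proof -
  let ?I = "{- real m / 2<..<real m / 2}"
  have "(\<integral>\<^sup>+s. ennreal ((Aop m W s)\<^sup>2) \<partial>lborel)
      \<le> (\<integral>\<^sup>+s. ennreal (real m) * (\<integral>\<^sup>+t\<in>?I. ennreal ((W (s + t))\<^sup>2) \<partial>lborel) \<partial>lborel)"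
    by (intro nn_integral_mono Aop_sq_le) simp
  also have "\<dots> = ennreal (real m) * (\<integral>\<^sup>+s. (\<integral>\<^sup>+t\<in>?I. ennreal ((W (s + t))\<^sup>2) \<partial>lborel) \<partial>lborel)"
    by (rule nn_integral_cmult) measurable
  also have "\<dots> = ennreal (real m) * (emeasure lborel ?I * (\<integral>\<^sup>+x. ennreal ((W x)\<^sup>2) \<partial>lborel))"
    by (subst nn_integral_set_translate[of "\<lambda>x. ennreal ((W x)\<^sup>2)"]) simp_all
  also have "\<dots> = ennreal ((real m)\<^sup>2) * (\<integral>\<^sup>+x. ennreal ((W x)\<^sup>2) \<partial>lborel)"
    by (simp add: power2_eq_square ennreal_mult mult.assoc)
  finally show ?thesis .
qed

section \<open>Bounds for Q\<close>

lemma Qfun_le: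
  assumes c: "\<And>m. Phi2 (Suc m) (\<nu> * real (Suc m)) \<ge> 0"
    and [measurable]: "W \<in> borel_measurable borel"
  shows "Qfun \<nu> Phi2 W \<le> ennreal (1/2) * (\<Sum>m. ennreal (Phi2 (Suc m) (\<nu> * real (Suc m)) * (real (Suc m))\<^sup>2))
    * (\<integral>\<^sup>+x. ennreal ((W x)\<^sup>2) \<partial>lborel)"
proof -
  define c where "c m = Phi2 (Suc m) (\<nu> * real (Suc m))" for m
  have c0: "c m \<ge> 0" for m
    using c by (simp add: c_def)
  have "(\<integral>\<^sup>+s. (\<Sum>m. ennreal (c m * (Aop (Suc m) W s)\<^sup>2)) \<partial>lborel)
      = (\<Sum>m. ennreal (c m) * (\<integral>\<^sup>+s. ennreal ((Aop (Suc m) W s)\<^sup>2) \<partial>lborel))"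
    using c0 by (simp add: ennreal_mult nn_integral_suminf nn_integral_cmult)
  also have "\<dots> \<le> (\<Sum>m. ennreal (c m) * (ennreal ((real (Suc m))\<^sup>2) * (\<integral>\<^sup>+x. ennreal ((W x)\<^sup>2) \<partial>lborel)))"
    by (intro suminf_le mult_left_mono nn_integral_Aop_sq_le summableI) simp_all
  also have "\<dots> = (\<Sum>m. ennreal (c m * (real (Suc m))\<^sup>2)) * (\<integral>\<^sup>+x. ennreal ((W x)\<^sup>2) \<partial>lborel)"
    using c0 by (simp add: ennreal_mult mult.assoc flip: ennreal_suminf_multc)
  finally show ?thesis
    unfolding Qfun_def c_def mult.assoc by (rule mult_left_mono) simp
qed

lemma integrable_plateau_sq: "L \<ge> 0 \<Longrightarrow> integrable lborel (\<lambda>x. (plateau L x)\<^sup>2)"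
  using Ccl_if_C0[OF C0_scaled_plateau[of L 1]] by (simp add: Ccl_def)

lemma integral_plateau_sq_bounds:
  assumes "L \<ge> 0"
  shows "2 * L \<le> (\<integral>x. (plateau L x)\<^sup>2 \<partial>lborel)" and "(\<integral>x. (plateau L x)\<^sup>2 \<partial>lborel) \<le> 2 * L + 2"
proof -
  have "(\<integral>x. indicator {-L..L} x \<partial>lborel) \<le> (\<integral>x. (plateau L x)\<^sup>2 \<partial>lborel)"
    using plateau_eq_1[OF assms]
    by (intro integral_mono integrable_plateau_sq integrable_real_indicator assms)
       (auto simp: indicator_def emeasure_lborel_Icc_eq)
  then show "2 * L \<le> (\<integral>x. (plateau L x)\<^sup>2 \<partial>lborel)"
    using assms by simp
  have "(\<integral>x. (plateau L x)\<^sup>2 \<partial>lborel) \<le> (\<integral>x. indicator {-(L + 1)..L + 1} x \<partial>lborel)"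
    using plateau_eq_0[OF assms] plateau_nonneg[of L] plateau_le_1[of L]
    by (intro integral_mono integrable_plateau_sq integrable_real_indicator assms)
       (auto simp: indicator_def emeasure_lborel_Icc_eq abs_le_iff not_le power_le_one)
  then show "(\<integral>x. (plateau L x)\<^sup>2 \<partial>lborel) \<le> 2 * L + 2"
    using assms by simp
qed

lemma CK_scaled_plateau:
  assumes "L > 0" and "K \<ge> 0"
  shows "CK K (\<lambda>x. sqrt (2 * K / (\<integral>x. (plateau L x)\<^sup>2 \<partial>lborel)) * plateau L x)"
proof -
  define I where "I = (\<integral>x. (plateau L x)\<^sup>2 \<partial>lborel)"
  have "I > 0"
    using integral_plateau_sq_bounds(1)[of L] assms(1) by (simp add: I_def)
  have "(\<integral>x. (sqrt (2 * K / I) * plateau L x)\<^sup>2 \<partial>lborel) = (sqrt (2 * K / I))\<^sup>2 * I"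
    by (simp add: I_def power_mult_distrib)
  also have "\<dots> = 2 * K"
    using \<open>I > 0\<close> assms(2) by simp
  finally show ?thesis
    unfolding CK_def I_def[symmetric] using \<open>I > 0\<close> assms
    by (auto intro!: Ccl_if_C0 C0_scaled_plateau)
qed

lemma Qfun_scaled_plateau_ge:
  assumes c: "\<And>m. Phi2 (Suc m) (\<nu> * real (Suc m)) \<ge> 0" and "real N \<le> L"
  shows "ennreal (h\<^sup>2 * (\<Sum>m<N. Phi2 (Suc m) (\<nu> * real (Suc m)) * (real (Suc m))\<^sup>2) * (L - real N / 2))
    \<le> Qfun \<nu> Phi2 (\<lambda>x. h * plateau L x)"
proof -
  define c where "c m = Phi2 (Suc m) (\<nu> * real (Suc m))" for m
  define T where "T = (\<Sum>m<N. c m * (real (Suc m))\<^sup>2)"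
  define R where "R = L - real N / 2"
  have "T \<ge> 0" "R \<ge> 0"
    using c assms(2) by (auto simp: T_def R_def c_def intro: sum_nonneg)
  have "L \<ge> 0"
    using assms(2) by simp
  have plateau_sum: "ennreal (h\<^sup>2 * T) * indicator {-R..R} s
      \<le> (\<Sum>m. ennreal (c m * (Aop (Suc m) (\<lambda>x. h * plateau L x) s)\<^sup>2))" for s
  proof (cases "s \<in> {-R..R}")
    case True
    have "Aop (Suc m) (\<lambda>x. h * plateau L x) s = h * real (Suc m)" if "m < N" for m
    proof (rule Aop_scaled_plateau[OF \<open>L \<ge> 0\<close>])
      have "real (Suc m) \<le> real N" and "-R \<le> s" and "s \<le> R"
        using that True by auto
      then show "\<bar>s\<bar> \<le> L - real (Suc m) / 2"
        unfolding R_def abs_le_iff by (simp add: field_simps)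
    qed
    then have "ennreal (h\<^sup>2 * T) = (\<Sum>m<N. ennreal (c m * (Aop (Suc m) (\<lambda>x. h * plateau L x) s)\<^sup>2))"
      using c by (simp add: T_def c_def sum_distrib_left power_mult_distrib mult_ac sum_ennreal)
    also have "\<dots> \<le> (\<Sum>m. ennreal (c m * (Aop (Suc m) (\<lambda>x. h * plateau L x) s)\<^sup>2))"
      by (intro sum_le_suminf summableI) auto
    finally show ?thesis
      using True by simp
  qed simp
  have "ennreal (h\<^sup>2 * T * R) = ennreal (1/2) * ennreal (h\<^sup>2 * T * (2 * R))"
    using \<open>T \<ge> 0\<close> \<open>R \<ge> 0\<close> by (subst ennreal_mult[symmetric]) auto
  also have "\<dots> = ennreal (1/2) * (ennreal (h\<^sup>2 * T) * emeasure lborel {-R..R})"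
    using \<open>T \<ge> 0\<close> \<open>R \<ge> 0\<close> by (simp add: ennreal_mult)
  also have "\<dots> \<le> ennreal (1/2) * (\<integral>\<^sup>+s. (\<Sum>m. ennreal (c m * (Aop (Suc m) (\<lambda>x. h * plateau L x) s)\<^sup>2)) \<partial>lborel)"
    by (intro mult_left_mono order.trans[OF _ nn_integral_mono[OF plateau_sum]])
       (simp_all add: nn_integral_cmult_indicator)
  finally show ?thesis
    by (simp add: Qfun_def c_def T_def R_def)
qed

lemma Qfun_le_if_CK:
  assumes c: "\<And>m. Phi2 (Suc m) (\<nu> * real (Suc m)) \<ge> 0" and "CK K W"
  shows "Qfun \<nu> Phi2 W \<le> (\<Sum>m. ennreal (Phi2 (Suc m) (\<nu> * real (Suc m)) * K * (real (Suc m))\<^sup>2))"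
proof -
  have W: "W \<in> borel_measurable borel" "integrable lborel (\<lambda>x. (W x)\<^sup>2)"
    and K: "(\<integral>x. (W x)\<^sup>2 \<partial>lborel) = 2 * K"
    using assms(2) by (auto simp: CK_def Ccl_def)
  have "0 \<le> (\<integral>x. (W x)\<^sup>2 \<partial>lborel)"
    by simp
  then have "K \<ge> 0"
    using K by simp
  have "(\<integral>\<^sup>+x. ennreal ((W x)\<^sup>2) \<partial>lborel) = ennreal (2 * K)"
    using W K by (simp add: nn_integral_eq_integral)
  then have "Qfun \<nu> Phi2 W
      \<le> ennreal (1/2) * (\<Sum>m. ennreal (Phi2 (Suc m) (\<nu> * real (Suc m)) * (real (Suc m))\<^sup>2)) * ennreal (2 * K)"
    using Qfun_le[of Phi2 \<nu>, OF c W(1)] by simp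
  also have "\<dots> = (\<Sum>m. ennreal (Phi2 (Suc m) (\<nu> * real (Suc m)) * (real (Suc m))\<^sup>2))
      * (ennreal (1/2) * ennreal (2 * K))"
    by (simp only: ac_simps)
  also have "\<dots> = (\<Sum>m. ennreal (Phi2 (Suc m) (\<nu> * real (Suc m)) * (real (Suc m))\<^sup>2)) * ennreal K"
    using \<open>K \<ge> 0\<close> by (subst ennreal_mult[symmetric]) auto
  also have "\<dots> = (\<Sum>m. ennreal (Phi2 (Suc m) (\<nu> * real (Suc m)) * (real (Suc m))\<^sup>2) * ennreal K)"
    by simp
  also have "\<dots> = (\<Sum>m. ennreal (Phi2 (Suc m) (\<nu> * real (Suc m)) * K * (real (Suc m))\<^sup>2))"
  proof (rule suminf_cong)
    fix m
    show "ennreal (Phi2 (Suc m) (\<nu> * real (Suc m)) * (real (Suc m))\<^sup>2) * ennreal K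
        = ennreal (Phi2 (Suc m) (\<nu> * real (Suc m)) * K * (real (Suc m))\<^sup>2)"
      using c[of m] \<open>K \<ge> 0\<close> by (subst ennreal_mult[symmetric]) (simp_all add: mult_ac)
  qed
  finally show ?thesis .
qed

lemma SUP_Qfun_ge_plateau_estimate:
  assumes c: "\<And>m. Phi2 (Suc m) (\<nu> * real (Suc m)) \<ge> 0" and "K > 0" and "real N < L"
  shows "ennreal (K * (\<Sum>m<N. Phi2 (Suc m) (\<nu> * real (Suc m)) * (real (Suc m))\<^sup>2)
      * ((2 * L - real N) / (2 * L + 2)))
    \<le> (SUP W\<in>{W. CK K W}. Qfun \<nu> Phi2 W)"
proof -
  define T where "T = (\<Sum>m<N. Phi2 (Suc m) (\<nu> * real (Suc m)) * (real (Suc m))\<^sup>2)"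
  define I where "I = (\<integral>x. (plateau L x)\<^sup>2 \<partial>lborel)"
  define h where "h = sqrt (2 * K / I)"
  have "T \<ge> 0"
    using c by (simp add: T_def sum_nonneg)
  have "2 * L \<le> I" "I \<le> 2 * L + 2"
    using integral_plateau_sq_bounds[of L] assms(3) by (simp_all add: I_def)
  then have "I > 0"
    using assms(3) by simp
  have "K * T * ((2 * L - real N) / (2 * L + 2)) \<le> K * T * ((2 * L - real N) / I)"
    using \<open>K > 0\<close> \<open>T \<ge> 0\<close> \<open>I > 0\<close> \<open>I \<le> 2 * L + 2\<close> assms(3)
    by (intro mult_left_mono divide_left_mono) auto
  also have "\<dots> = h\<^sup>2 * T * (L - real N / 2)"
    using \<open>K > 0\<close> \<open>I > 0\<close> by (simp add: h_def field_simps)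
  finally have "ennreal (K * T * ((2 * L - real N) / (2 * L + 2))) \<le> ennreal (h\<^sup>2 * T * (L - real N / 2))"
    by (rule ennreal_leI)
  also have "\<dots> \<le> Qfun \<nu> Phi2 (\<lambda>x. h * plateau L x)"
    using Qfun_scaled_plateau_ge[of Phi2 \<nu>, OF c, of N L h] assms(3) by (simp add: T_def)
  also have "\<dots> \<le> (SUP W\<in>{W. CK K W}. Qfun \<nu> Phi2 W)"
    using CK_scaled_plateau[of L K] \<open>K > 0\<close> assms(3) by (intro SUP_upper) (simp add: h_def I_def)
  finally show ?thesis
    by (simp add: T_def)
qed

lemma partial_sum_le_SUP_Qfun:
  assumes c: "\<And>m. Phi2 (Suc m) (\<nu> * real (Suc m)) \<ge> 0" and "K > 0"
  shows "(\<Sum>m<N. ennreal (Phi2 (Suc m) (\<nu> * real (Suc m)) * K * (real (Suc m))\<^sup>2))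
    \<le> (SUP W\<in>{W. CK K W}. Qfun \<nu> Phi2 W)"
proof -
  define T where "T = (\<Sum>m<N. Phi2 (Suc m) (\<nu> * real (Suc m)) * (real (Suc m))\<^sup>2)"
  have "(\<Sum>m<N. ennreal (Phi2 (Suc m) (\<nu> * real (Suc m)) * K * (real (Suc m))\<^sup>2)) = ennreal (K * T)"
    using c \<open>K > 0\<close> by (simp add: T_def sum_ennreal sum_distrib_left mult_ac)
  also have "ennreal (K * T) \<le> (SUP W\<in>{W. CK K W}. Qfun \<nu> Phi2 W)"
  proof (rule LIMSEQ_le_const2)
    have "(\<lambda>n. (2 * real n - real N) / (2 * real n + 2)) \<longlonglongrightarrow> 1"
      by real_asymp
    from tendsto_mult_left[OF this, of "K * T"]
    show "(\<lambda>n. ennreal (K * T * ((2 * real n - real N) / (2 * real n + 2)))) \<longlonglongrightarrow> ennreal (K * T)"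
      by (intro tendsto_ennrealI) simp
    show "\<exists>n0. \<forall>n\<ge>n0. ennreal (K * T * ((2 * real n - real N) / (2 * real n + 2)))
        \<le> (SUP W\<in>{W. CK K W}. Qfun \<nu> Phi2 W)"
      unfolding T_def using SUP_Qfun_ge_plateau_estimate[of Phi2 \<nu>, OF c \<open>K > 0\<close>]
      by (intro exI[of _ "Suc N"]) simp
  qed
  finally show ?thesis .
qed

theorem lemma2p8:
  fixes \<nu> K \<gamma> :: real
    and Phi Phi1 Phi2 Phi3 Phi4 :: "nat \<Rightarrow> real \<Rightarrow> real"
  assumes nu: "\<nu> > 0"
    and K: "0 < K" "K < \<nu>\<^sup>2 / 2"
    and gamma: "5/2 < \<gamma>" "\<gamma> < 3"
    and d1: "\<And>m x. m \<ge> 1 \<Longrightarrow> x \<ge> 0 \<Longrightarrow> (Phi m has_real_derivative Phi1 m x) (at x within {0..})"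
    and d2: "\<And>m x. m \<ge> 1 \<Longrightarrow> x \<ge> 0 \<Longrightarrow> (Phi1 m has_real_derivative Phi2 m x) (at x within {0..})"
    and d3: "\<And>m x. m \<ge> 1 \<Longrightarrow> x \<ge> 0 \<Longrightarrow> (Phi2 m has_real_derivative Phi3 m x) (at x within {0..})"
    and d4: "\<And>m x. m \<ge> 1 \<Longrightarrow> x \<ge> 0 \<Longrightarrow> (Phi3 m has_real_derivative Phi4 m x) (at x within {0..})"
    and c4: "\<And>m. m \<ge> 1 \<Longrightarrow> continuous_on {0..} (Phi4 m)"
    and signs: "\<And>m x. m \<ge> 1 \<Longrightarrow> x \<ge> 0 \<Longrightarrow>
       Phi m x \<ge> 0 \<and> Phi1 m x \<le> 0 \<and> Phi2 m x \<ge> 0 \<and> Phi3 m x \<le> 0 \<and> Phi4 m x \<ge> 0"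
    and strict: "\<And>x. x > 0 \<Longrightarrow>
       Phi 1 x > 0 \<and> Phi1 1 x < 0 \<and> Phi2 1 x > 0 \<and> Phi3 1 x < 0 \<and> Phi4 1 x > 0"
    and s1: "summable (\<lambda>m. Phi1 (Suc m) (\<nu> * real (Suc m) - sqrt (2 * K * real (Suc m))) * real (Suc m))"
    and s2: "summable (\<lambda>m. Phi2 (Suc m) (\<nu> * real (Suc m) - sqrt (2 * K * real (Suc m))) * (real (Suc m))\<^sup>2)"
    and s3: "summable (\<lambda>m. Phi2 (Suc m) (\<nu> * real (Suc m)) * real (Suc m) powr \<gamma>)"
    and s4: "summable (\<lambda>m. Phi3 (Suc m) (\<nu> * real (Suc m) - sqrt (2 * K * real (Suc m))) * real (Suc m) powr (3/2))"
  shows "(SUP W\<in>{W. CK K W}. Qfun \<nu> Phi2 W) =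
         (\<Sum>m. ennreal (Phi2 (Suc m) (\<nu> * real (Suc m)) * K * (real (Suc m))\<^sup>2))"
proof (rule antisym)
  have c: "\<And>m. Phi2 (Suc m) (\<nu> * real (Suc m)) \<ge> 0"
    using signs nu by simp
  show "(SUP W\<in>{W. CK K W}. Qfun \<nu> Phi2 W)
      \<le> (\<Sum>m. ennreal (Phi2 (Suc m) (\<nu> * real (Suc m)) * K * (real (Suc m))\<^sup>2))"
    by (rule SUP_least) (use Qfun_le_if_CK[of Phi2 \<nu>, OF c] in blast)
  show "(\<Sum>m. ennreal (Phi2 (Suc m) (\<nu> * real (Suc m)) * K * (real (Suc m))\<^sup>2))
      \<le> (SUP W\<in>{W. CK K W}. Qfun \<nu> Phi2 W)"
    unfolding suminf_eq_SUP by (rule SUP_least) (rule partial_sum_le_SUP_Qfun[of Phi2 \<nu>, OF c K(1)])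
qed

end
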